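(* Let $G$ be a simple graph with $m$ edges and girth $g(G)\ge 4$ (i.e. $G$ has no triangles). For $k=2,3,4$ define $\xi_{k-1}(G)=\sum_{uv\in E(G)}M_1^k(G-\{u,v\})$ (so $\xi_1$ sums $M_1$, $\xi_2$ sums $F$, $\xi_3$ sums $M_1^4$ of $G-\{u,v\}$ over all edges $uv$). Then \begin{enumerate} \item $\xi_1(G)=(m+3)M_1(G)-F(G)-4M_2(G)-2m$; \item $\xi_2(G)=(m+3)F(G)-M_1^4(G)-3\alpha(G)+6M_2(G)-4M_1(G)+2m$; \item $\xi_3(G)=(m+4)M_1^4(G)-M_1^5(G)+5M_1(G)-2m-4\alpha_2(G)+6\alpha(G)-6F(G)-8M_2(G)$. \end{enumerate}
   Context: All graphs are finite, simple and undirected. $d_G(v)$ is the degree of $v$ in $G$; $G-\{u,v\}$ is the graph obtained by deleting the vertices $u,v$ and all incident edges. The girth $g(G)$ is the length of a shortest cycle (infinite if acyclic). $M_1^\alpha(G)=\sum_{v\in V(G)}d_G(v)^\alpha$ (exponent on degrees); $M_1(G)=M_1^2(G)$, $F(G)=M_1^3(G)$; $M_2(G)=\sum_{uv\in E(G)}d_G(u)d_G(v)$; $\alpha_\lambda(G)=\sum_{uv\in E(G)}d_G(u)d_G(v)\big[d_G(u)^\lambda+d_G(v)^\lambda\big]$, $\alpha(G)=\alpha_1(G)$. *)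

theory Defs
  imports Main
begin

definition simple_graph :: "'a set \<Rightarrow> 'a set set \<Rightarrow> bool" where
  "simple_graph V E \<longleftrightarrow> finite V \<and>
     (\<forall>e\<in>E. \<exists>u v. e = {u, v} \<and> u \<noteq> v \<and> u \<in> V \<and> v \<in> V)"

definition degree :: "'a set set \<Rightarrow> 'a \<Rightarrow> nat" where
  "degree E v = card {e \<in> E. v \<in> e}"

definition triangle_free :: "'a set set \<Rightarrow> bool" where
  "triangle_free E \<longleftrightarrow>
     \<not> (\<exists>u v w. u \<noteq> v \<and> v \<noteq> w \<and> u \<noteq> w \<and> {u, v} \<in> E \<and> {v, w} \<in> E \<and> {u, w} \<in> E)"

definition del_verts_V :: "'a set \<Rightarrow> 'a set \<Rightarrow> 'a set" where
  "del_verts_V V S = V - S"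

definition del_verts_E :: "'a set set \<Rightarrow> 'a set \<Rightarrow> 'a set set" where
  "del_verts_E E S = {e \<in> E. e \<inter> S = {}}"

definition M1p :: "nat \<Rightarrow> 'a set \<Rightarrow> 'a set set \<Rightarrow> int" where
  "M1p a V E = (\<Sum>v\<in>V. int (degree E v) ^ a)"

definition M2 :: "'a set set \<Rightarrow> int" where
  "M2 E = (\<Sum>e\<in>E. \<Prod>v\<in>e. int (degree E v))"

definition alpha_idx :: "nat \<Rightarrow> 'a set set \<Rightarrow> int" where
  "alpha_idx l E = (\<Sum>e\<in>E. (\<Prod>v\<in>e. int (degree E v)) * (\<Sum>v\<in>e. int (degree E v) ^ l))"

definition xi :: "nat \<Rightarrow> 'a set \<Rightarrow> 'a set set \<Rightarrow> int" where
  "xi k V E = (\<Sum>e\<in>E. M1p (k + 1) (del_verts_V V e) (del_verts_E E e))"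

end

theory Submission
  imports Defs
begin

text \<open>Removing the ends of an edge ab deletes a and b and lowers the degree of every
  other vertex w by the number of its neighbours among a, b; in a triangle-free graph
  this number is at most one. Hence d(w)^k drops by d(w)^k - (d(w)-1)^k exactly for
  the neighbours of a or b other than a, b themselves. Summing over all edges and
  double counting (each vertex x lies on d(x) edges, each edge is two ordered adjacent
  pairs) expresses the sum as a combination of vertex sums of d(x) times a polynomial
  in d(x) and edge sums of symmetric polynomials in the two end degrees; expanding
  these polynomials for k = 2, 3, 4 gives the three identities.\<close>

definition neighbours :: "'a set set \<Rightarrow> 'a \<Rightarrow> 'a set" where
  "neighbours E x = {w. {x, w} \<in> E}"

definition pow_bdiff :: "nat \<Rightarrow> int \<Rightarrow> int" where
  "pow_bdiff k y = y ^ k - (y - 1) ^ k"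

lemma simple_graph_edgeE:
  assumes "simple_graph V E" and "e \<in> E"
  obtains a b where "e = {a, b}" and "a \<noteq> b" and "a \<in> V" and "b \<in> V"
  using assms unfolding simple_graph_def by blast

lemma simple_graph_edges_subset_Pow: "simple_graph V E \<Longrightarrow> E \<subseteq> Pow V"
  by (auto elim: simple_graph_edgeE)

lemma simple_graph_finite_edges: "simple_graph V E \<Longrightarrow> finite E"
  by (meson finite_Pow_iff finite_subset simple_graph_def simple_graph_edges_subset_Pow)

lemma simple_graph_no_loop: "simple_graph V E \<Longrightarrow> {x} \<notin> E"
  by (metis doubleton_eq_iff insertI1 simple_graph_edgeE singletonD)

lemma neighbours_sym: "w \<in> neighbours E x \<longleftrightarrow> x \<in> neighbours E w"
  unfolding neighbours_def by (simp add: insert_commute)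

lemma neighbours_subset:
  assumes "simple_graph V E"
  shows "neighbours E x \<subseteq> V" and "x \<notin> neighbours E x"
proof -
  show "neighbours E x \<subseteq> V"
  proof
    fix w assume "w \<in> neighbours E x"
    then have "{x, w} \<in> E" unfolding neighbours_def by simp
    then show "w \<in> V" using simple_graph_edges_subset_Pow[OF assms] by blast
  qed
  show "x \<notin> neighbours E x"
    unfolding neighbours_def using simple_graph_no_loop[OF assms] by simp
qed

lemma finite_neighbours: "simple_graph V E \<Longrightarrow> finite (neighbours E x)"
  by (meson finite_subset neighbours_subset(1) simple_graph_def)

lemma neighbours_del_verts_E:
  "x \<notin> S \<Longrightarrow> neighbours (del_verts_E E S) x = neighbours E x - S"
  unfolding neighbours_def del_verts_E_def by auto

lemma bij_betw_neighbours_incident_edges: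
  assumes "simple_graph V E"
  shows "bij_betw (\<lambda>w. {x, w}) (neighbours E x) {e \<in> E. x \<in> e}"
proof (rule bij_betw_imageI)
  show "inj_on (\<lambda>w. {x, w}) (neighbours E x)"
    by (simp add: inj_on_def doubleton_eq_iff)
  show "(\<lambda>w. {x, w}) ` neighbours E x = {e \<in> E. x \<in> e}"
  proof (intro equalityI subsetI)
    fix e assume e: "e \<in> {e \<in> E. x \<in> e}"
    then obtain a b where "e = {a, b}"
      using assms by (blast elim: simple_graph_edgeE)
    then obtain w where "e = {x, w}" using e by (auto simp: insert_commute)
    then show "e \<in> (\<lambda>w. {x, w}) ` neighbours E x"
      using e unfolding neighbours_def by blast
  qed (auto simp: neighbours_def)
qed

lemma degree_eq_card_neighbours:
  "simple_graph V E \<Longrightarrow> degree E x = card (neighbours E x)"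
  unfolding degree_def using bij_betw_same_card[OF bij_betw_neighbours_incident_edges] by metis

lemma simple_graph_del_verts:
  "simple_graph V E \<Longrightarrow> simple_graph (del_verts_V V S) (del_verts_E E S)"
  unfolding simple_graph_def del_verts_V_def del_verts_E_def by fastforce

lemma degree_del_verts_E:
  assumes "simple_graph V E" and "x \<notin> S"
  shows "degree (del_verts_E E S) x = card (neighbours E x - S)"
  using degree_eq_card_neighbours[OF simple_graph_del_verts[OF assms(1)]]
  by (simp add: neighbours_del_verts_E[OF assms(2)])

lemma triangle_free_no_common_neighbour:
  assumes "simple_graph V E" and "triangle_free E" and "{a, b} \<in> E"
  shows "\<not> (w \<in> neighbours E a \<and> w \<in> neighbours E b)"
proof
  assume w: "w \<in> neighbours E a \<and> w \<in> neighbours E b"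
  then have "a \<noteq> b \<and> b \<noteq> w \<and> a \<noteq> w \<and> {a, b} \<in> E \<and> {b, w} \<in> E \<and> {a, w} \<in> E"
    using assms(3) neighbours_subset(2)[OF assms(1)] simple_graph_no_loop[OF assms(1)]
    unfolding neighbours_def by auto
  with assms(2) show False unfolding triangle_free_def by blast
qed

lemma degree_del_edge_ends:
  assumes sg: "simple_graph V E" and tf: "triangle_free E" and ab: "{a, b} \<in> E"
    and w: "w \<notin> {a, b}"
  shows "degree (del_verts_E E {a, b}) w
           = degree E w - (if w \<in> neighbours E a \<union> neighbours E b then 1 else 0)"
proof -
  have "card (neighbours E w \<inter> {a, b})
          = (if w \<in> neighbours E a \<union> neighbours E b then 1 else 0)"
    using triangle_free_no_common_neighbour[OF sg tf ab, of w]
    by (auto simp: neighbours_sym[of w] Int_insert_right)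
  then show ?thesis
    using degree_del_verts_E[OF sg w] degree_eq_card_neighbours[OF sg]
      card_Diff_subset_Int[of "neighbours E w" "{a, b}"] by simp
qed

lemma sum_neighbours_off_edge:
  fixes f :: "'a \<Rightarrow> 'b::ab_group_add"
  assumes sg: "simple_graph V E" and ab: "{a, b} \<in> E"
  shows "(\<Sum>w\<in>V - {a, b}. if w \<in> neighbours E a then f w else 0)
           = (\<Sum>w\<in>neighbours E a. f w) - f b"
proof -
  have "{w \<in> V - {a, b}. w \<in> neighbours E a} = neighbours E a - {b}"
    using neighbours_subset[OF sg, of a] by blast
  moreover have "b \<in> neighbours E a" using ab unfolding neighbours_def by simp
  ultimately show ?thesis
    using sg finite_neighbours[OF sg] unfolding simple_graph_def
    by (simp add: sum.inter_filter[symmetric] sum_diff1)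
qed

lemma power_pred_eq: "(y - 1) ^ k = y ^ k - pow_bdiff k y"
  unfolding pow_bdiff_def by simp

lemma M1p_del_edge:
  assumes sg: "simple_graph V E" and tf: "triangle_free E" and ab: "{a, b} \<in> E"
  defines "d w \<equiv> int (degree E w)"
  shows "M1p k (del_verts_V V {a, b}) (del_verts_E E {a, b}) = M1p k V E
           - (\<Sum>x\<in>{a, b}. d x ^ k - pow_bdiff k (d x) + (\<Sum>w\<in>neighbours E x. pow_bdiff k (d w)))"
proof -
  have ba: "{b, a} \<in> E" using ab by (simp add: insert_commute)
  have "a \<noteq> b" "a \<in> V" "b \<in> V"
    using ab simple_graph_no_loop[OF sg] simple_graph_edges_subset_Pow[OF sg] by auto
  define D where "D w = (if w \<in> neighbours E a then pow_bdiff k (d w) else 0)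
                       + (if w \<in> neighbours E b then pow_bdiff k (d w) else 0)" for w
  have "int (degree (del_verts_E E {a, b}) w) ^ k = d w ^ k - D w" if "w \<in> V - {a, b}" for w
  proof -
    have "w \<in> neighbours E a \<union> neighbours E b \<Longrightarrow> degree E w \<noteq> 0"
      using degree_eq_card_neighbours[OF sg, of w] finite_neighbours[OF sg, of w]
      by (auto simp: neighbours_sym[of w])
    then show ?thesis
      using degree_del_edge_ends[OF sg tf ab, of w] that
        triangle_free_no_common_neighbour[OF sg tf ab, of w]
      by (auto simp: D_def d_def of_nat_diff power_pred_eq)
  qed
  then have "M1p k (del_verts_V V {a, b}) (del_verts_E E {a, b})
               = (\<Sum>w\<in>V - {a, b}. d w ^ k) - (\<Sum>w\<in>V - {a, b}. D w)"
    unfolding M1p_def del_verts_V_def by (simp add: sum_subtractf)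
  also have "(\<Sum>w\<in>V - {a, b}. d w ^ k) = M1p k V E - (d a ^ k + d b ^ k)"
    using sg \<open>a \<noteq> b\<close> \<open>a \<in> V\<close> \<open>b \<in> V\<close>
    unfolding M1p_def d_def simple_graph_def by (simp add: sum_diff)
  also have "(\<Sum>w\<in>V - {a, b}. D w)
      = ((\<Sum>w\<in>neighbours E a. pow_bdiff k (d w)) - pow_bdiff k (d b))
        + ((\<Sum>w\<in>neighbours E b. pow_bdiff k (d w)) - pow_bdiff k (d a))"
    unfolding D_def sum.distrib
    using sum_neighbours_off_edge[OF sg ab, of "\<lambda>w. pow_bdiff k (d w)"]
      sum_neighbours_off_edge[OF sg ba, of "\<lambda>w. pow_bdiff k (d w)"]
    by (simp add: insert_commute[of b a])
  finally show ?thesis using \<open>a \<noteq> b\<close> by simp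
qed

lemma sum_vertices_incident_edges:
  fixes f :: "'a \<Rightarrow> 'a set \<Rightarrow> 'b::comm_monoid_add"
  assumes "simple_graph V E"
  shows "(\<Sum>x\<in>V. \<Sum>e\<in>{e \<in> E. x \<in> e}. f x e) = (\<Sum>e\<in>E. \<Sum>x\<in>e. f x e)"
proof -
  have "{x \<in> V. x \<in> e} = e" if "e \<in> E" for e
    using that simple_graph_edges_subset_Pow[OF assms] by blast
  then show ?thesis
    using sum.swap_restrict[of V E f "\<lambda>x e. x \<in> e"] assms simple_graph_finite_edges[OF assms]
    unfolding simple_graph_def by simp
qed

lemma sum_edges_endpoints:
  fixes g :: "'a \<Rightarrow> 'b::comm_semiring_1"
  assumes "simple_graph V E"
  shows "(\<Sum>e\<in>E. \<Sum>x\<in>e. g x) = (\<Sum>x\<in>V. of_nat (degree E x) * g x)"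
  using sum_vertices_incident_edges[OF assms, of "\<lambda>x e. g x"] by (simp add: degree_def)

lemma handshake:
  assumes "simple_graph V E"
  shows "M1p 1 V E = 2 * int (card E)"
proof -
  have "card e = 2" if "e \<in> E" for e
    using assms that by (auto elim: simple_graph_edgeE)
  then show ?thesis
    using sum_edges_endpoints[OF assms, of "\<lambda>x. 1 :: int"] unfolding M1p_def by simp
qed

lemma sum_neighbours_as_edges:
  fixes h :: "'a \<Rightarrow> 'a \<Rightarrow> 'b::comm_monoid_add"
  assumes sg: "simple_graph V E"
  shows "(\<Sum>x\<in>V. \<Sum>w\<in>neighbours E x. h x w) = (\<Sum>e\<in>E. \<Sum>x\<in>e. \<Sum>w\<in>e - {x}. h x w)"
proof -
  have "(\<Sum>w\<in>neighbours E x. h x w) = (\<Sum>e\<in>{e \<in> E. x \<in> e}. \<Sum>w\<in>e - {x}. h x w)" for x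
  proof -
    have "(\<Sum>w\<in>neighbours E x. h x w) = (\<Sum>w\<in>neighbours E x. \<Sum>u\<in>{x, w} - {x}. h x u)"
      using neighbours_subset(2)[OF sg, of x] by (intro sum.cong) (auto simp: insert_Diff_if)
    also have "\<dots> = (\<Sum>e\<in>{e \<in> E. x \<in> e}. \<Sum>w\<in>e - {x}. h x w)"
      by (rule sum.reindex_bij_betw[OF bij_betw_neighbours_incident_edges[OF sg]])
    finally show ?thesis .
  qed
  then show ?thesis using sum_vertices_incident_edges[OF sg] by simp
qed

lemma xi_eq:
  assumes sg: "simple_graph V E" and tf: "triangle_free E"
  defines "d w \<equiv> int (degree E w)"
  shows "xi k V E = int (card E) * M1p (k + 1) V E - M1p (k + 2) V E
           + (\<Sum>x\<in>V. d x * pow_bdiff (k + 1) (d x))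
           - (\<Sum>e\<in>E. \<Sum>x\<in>e. \<Sum>w\<in>e - {x}. d x * pow_bdiff (k + 1) (d w))"
proof -
  define g where "g x = d x ^ (k + 1) - pow_bdiff (k + 1) (d x)
                        + (\<Sum>w\<in>neighbours E x. pow_bdiff (k + 1) (d w))" for x
  have "xi k V E = (\<Sum>e\<in>E. M1p (k + 1) V E - (\<Sum>x\<in>e. g x))"
    unfolding xi_def
  proof (rule sum.cong[OF refl])
    fix e assume "e \<in> E"
    then obtain a b where "e = {a, b}" using sg by (blast elim: simple_graph_edgeE)
    then show "M1p (k + 1) (del_verts_V V e) (del_verts_E E e) = M1p (k + 1) V E - (\<Sum>x\<in>e. g x)"
      using M1p_del_edge[OF sg tf, of a b "k + 1"] \<open>e \<in> E\<close> unfolding g_def d_def by simp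
  qed
  also have "\<dots> = int (card E) * M1p (k + 1) V E - (\<Sum>x\<in>V. d x * g x)"
    using sum_edges_endpoints[OF sg, of g] by (simp add: sum_subtractf d_def)
  also have "(\<Sum>x\<in>V. d x * g x) = M1p (k + 2) V E - (\<Sum>x\<in>V. d x * pow_bdiff (k + 1) (d x))
      + (\<Sum>x\<in>V. \<Sum>w\<in>neighbours E x. d x * pow_bdiff (k + 1) (d w))"
    unfolding g_def M1p_def d_def
    by (simp add: algebra_simps sum.distrib sum_subtractf sum_distrib_left)
  also have "(\<Sum>x\<in>V. \<Sum>w\<in>neighbours E x. d x * pow_bdiff (k + 1) (d w))
      = (\<Sum>e\<in>E. \<Sum>x\<in>e. \<Sum>w\<in>e - {x}. d x * pow_bdiff (k + 1) (d w))"
    by (rule sum_neighbours_as_edges[OF sg])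
  finally show ?thesis by simp
qed

lemma sum_degree_times_pow_bdiff:
  assumes "\<And>y. y * pow_bdiff k y = c4 * y ^ 4 + c3 * y ^ 3 + c2 * y ^ 2 + c1 * y ^ 1"
  shows "(\<Sum>x\<in>V. int (degree E x) * pow_bdiff k (int (degree E x)))
           = c4 * M1p 4 V E + c3 * M1p 3 V E + c2 * M1p 2 V E + c1 * M1p 1 V E"
  unfolding M1p_def assms by (simp add: sum.distrib sum_distrib_left)

lemma sum_edges_cross_pow_bdiff:
  assumes sg: "simple_graph V E"
    and poly: "\<And>y z. y * pow_bdiff k z + z * pow_bdiff k y
                 = c3 * (y * z) * (y ^ 2 + z ^ 2) + c2 * (y * z) * (y + z) + c1 * (y * z) + c0 * (y + z)"
  shows "(\<Sum>e\<in>E. \<Sum>x\<in>e. \<Sum>w\<in>e - {x}. int (degree E x) * pow_bdiff k (int (degree E w)))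
           = c3 * alpha_idx 2 E + c2 * alpha_idx 1 E + c1 * M2 E + c0 * M1p 2 V E"
proof -
  define d where "d w = int (degree E w)" for w
  have "(\<Sum>x\<in>e. \<Sum>w\<in>e - {x}. d x * pow_bdiff k (d w))
          = c3 * ((\<Prod>v\<in>e. d v) * (\<Sum>v\<in>e. d v ^ 2)) + c2 * ((\<Prod>v\<in>e. d v) * (\<Sum>v\<in>e. d v ^ 1))
            + c1 * (\<Prod>v\<in>e. d v) + c0 * (\<Sum>v\<in>e. d v)" if "e \<in> E" for e
  proof -
    obtain a b where "e = {a, b}" "a \<noteq> b" using sg \<open>e \<in> E\<close> by (blast elim: simple_graph_edgeE)
    then show ?thesis using poly[of "d a" "d b"] by (simp add: insert_Diff_if)
  qed
  then have "(\<Sum>e\<in>E. \<Sum>x\<in>e. \<Sum>w\<in>e - {x}. d x * pow_bdiff k (d w))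
      = c3 * alpha_idx 2 E + c2 * alpha_idx 1 E + c1 * M2 E + c0 * (\<Sum>e\<in>E. \<Sum>v\<in>e. d v)"
    unfolding alpha_idx_def M2_def d_def by (simp add: sum.distrib sum_distrib_left)
  also have "(\<Sum>e\<in>E. \<Sum>v\<in>e. d v) = M1p 2 V E"
    using sum_edges_endpoints[OF sg, of d] unfolding M1p_def d_def by (simp add: power2_eq_square)
  finally show ?thesis unfolding d_def .
qed

lemma xi_1_eq:
  assumes "simple_graph V E" and "triangle_free E"
  defines "m \<equiv> int (card E)"
  shows "xi 1 V E = (m + 3) * M1p 2 V E - M1p 3 V E - 4 * M2 E - 2 * m"
proof -
  have "(\<Sum>x\<in>V. int (degree E x) * pow_bdiff 2 (int (degree E x)))
          = 0 * M1p 4 V E + 0 * M1p 3 V E + 2 * M1p 2 V E + (-1) * M1p 1 V E"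
    by (rule sum_degree_times_pow_bdiff) (simp add: pow_bdiff_def algebra_simps power2_eq_square)
  moreover have "(\<Sum>e\<in>E. \<Sum>x\<in>e. \<Sum>w\<in>e - {x}. int (degree E x) * pow_bdiff 2 (int (degree E w)))
          = 0 * alpha_idx 2 E + 0 * alpha_idx 1 E + 4 * M2 E + (-1) * M1p 2 V E"
    by (rule sum_edges_cross_pow_bdiff[OF assms(1)])
      (simp add: pow_bdiff_def algebra_simps power2_eq_square)
  ultimately show ?thesis
    using xi_eq[OF assms(1,2), of 1] handshake[OF assms(1)] unfolding m_def by (simp add: algebra_simps numeral_eq_Suc)
qed

lemma xi_2_eq:
  assumes "simple_graph V E" and "triangle_free E"
  defines "m \<equiv> int (card E)"
  shows "xi 2 V E = (m + 3) * M1p 3 V E - M1p 4 V E - 3 * alpha_idx 1 E + 6 * M2 E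
                    - 4 * M1p 2 V E + 2 * m"
proof -
  have "(\<Sum>x\<in>V. int (degree E x) * pow_bdiff 3 (int (degree E x)))
          = 0 * M1p 4 V E + 3 * M1p 3 V E + (-3) * M1p 2 V E + 1 * M1p 1 V E"
    by (rule sum_degree_times_pow_bdiff)
      (simp add: pow_bdiff_def algebra_simps power2_eq_square power3_eq_cube)
  moreover have "(\<Sum>e\<in>E. \<Sum>x\<in>e. \<Sum>w\<in>e - {x}. int (degree E x) * pow_bdiff 3 (int (degree E w)))
          = 0 * alpha_idx 2 E + 3 * alpha_idx 1 E + (-6) * M2 E + 1 * M1p 2 V E"
    by (rule sum_edges_cross_pow_bdiff[OF assms(1)])
      (simp add: pow_bdiff_def algebra_simps power2_eq_square power3_eq_cube)
  ultimately show ?thesis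
    using xi_eq[OF assms(1,2), of 2] handshake[OF assms(1)] unfolding m_def by (simp add: algebra_simps numeral_eq_Suc)
qed

lemma xi_3_eq:
  assumes "simple_graph V E" and "triangle_free E"
  defines "m \<equiv> int (card E)"
  shows "xi 3 V E = (m + 4) * M1p 4 V E - M1p 5 V E + 5 * M1p 2 V E - 2 * m
                    - 4 * alpha_idx 2 E + 6 * alpha_idx 1 E - 6 * M1p 3 V E - 8 * M2 E"
proof -
  have "(\<Sum>x\<in>V. int (degree E x) * pow_bdiff 4 (int (degree E x)))
          = 4 * M1p 4 V E + (-6) * M1p 3 V E + 4 * M1p 2 V E + (-1) * M1p 1 V E"
    by (rule sum_degree_times_pow_bdiff)
      (simp add: pow_bdiff_def algebra_simps power2_eq_square power3_eq_cube power4_eq_xxxx)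
  moreover have "(\<Sum>e\<in>E. \<Sum>x\<in>e. \<Sum>w\<in>e - {x}. int (degree E x) * pow_bdiff 4 (int (degree E w)))
          = 4 * alpha_idx 2 E + (-6) * alpha_idx 1 E + 8 * M2 E + (-1) * M1p 2 V E"
    by (rule sum_edges_cross_pow_bdiff[OF assms(1)])
      (simp add: pow_bdiff_def algebra_simps power2_eq_square power3_eq_cube power4_eq_xxxx)
  ultimately show ?thesis
    using xi_eq[OF assms(1,2), of 3] handshake[OF assms(1)] unfolding m_def by (simp add: algebra_simps numeral_eq_Suc)
qed

theorem lemma2p2:
  fixes V :: "'a set" and E :: "'a set set"
  assumes "simple_graph V E" and "triangle_free E"
  defines "m \<equiv> int (card E)"
  shows "(xi 1 V E = (m + 3) * M1p 2 V E - M1p 3 V E - 4 * M2 E - 2 * m) \<and>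
         (xi 2 V E = (m + 3) * M1p 3 V E - M1p 4 V E - 3 * alpha_idx 1 E + 6 * M2 E
                    - 4 * M1p 2 V E + 2 * m) \<and>
         (xi 3 V E = (m + 4) * M1p 4 V E - M1p 5 V E + 5 * M1p 2 V E - 2 * m
                    - 4 * alpha_idx 2 E + 6 * alpha_idx 1 E - 6 * M1p 3 V E - 8 * M2 E)"
  using xi_1_eq[OF assms(1,2)] xi_2_eq[OF assms(1,2)] xi_3_eq[OF assms(1,2)]
  unfolding m_def by blast

end
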